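(* Let $T$ be a tree and let $u$ be a support vertex of $T$ such that $|N(u)\setminus L_u|=1$. Let $T'=T-(L_u\cup\{u\})$. Then $\gamma^{DLD}(T')=\gamma^{DLD}(T)-|L_u|$.
   Context: For a vertex $u$, $N(u)$ is its set of neighbours and $N[u]=N(u)\cup\{u\}$. A code in a graph with vertex set $V$ is a non-empty subset $C\subseteq V$; $I(C;u)=N[u]\cap C$. A code $C$ is solid-locating-dominating if $I(C;u)\ne\emptyset$ for every $u\in V\setminus C$ and $I(C;u)\not\subseteq I(C;v)$ for all distinct $u,v\in V\setminus C$; $\gamma^{DLD}$ denotes the minimum size of such a code. A leaf is a vertex of degree one; a support vertex is a vertex adjacent to at least one leaf; for a support vertex $u$, $L_u$ is the set of leaves adjacent to $u$. $T-X$ denotes the subgraph induced by $V(T)\setminus X$. *)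

theory Defs
  imports Main
begin

definition sgraph :: "'a set \<Rightarrow> ('a \<Rightarrow> 'a \<Rightarrow> bool) \<Rightarrow> bool" where
  "sgraph V E \<longleftrightarrow> finite V \<and> (\<forall>u v. E u v \<longrightarrow> u \<in> V \<and> v \<in> V)
      \<and> (\<forall>u v. E u v \<longrightarrow> E v u) \<and> (\<forall>u. \<not> E u u)"

definition nbhd :: "'a set \<Rightarrow> ('a \<Rightarrow> 'a \<Rightarrow> bool) \<Rightarrow> 'a \<Rightarrow> 'a set" where
  "nbhd V E u = {v \<in> V. E u v}"

definition cnbhd :: "'a set \<Rightarrow> ('a \<Rightarrow> 'a \<Rightarrow> bool) \<Rightarrow> 'a \<Rightarrow> 'a set" where
  "cnbhd V E u = insert u (nbhd V E u)"

definition connected_graph :: "'a set \<Rightarrow> ('a \<Rightarrow> 'a \<Rightarrow> bool) \<Rightarrow> bool" where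
  "connected_graph V E \<longleftrightarrow>
     (\<forall>u\<in>V. \<forall>v\<in>V. (\<lambda>x y. x \<in> V \<and> y \<in> V \<and> E x y)\<^sup>*\<^sup>* u v)"

definition is_cycle :: "'a set \<Rightarrow> ('a \<Rightarrow> 'a \<Rightarrow> bool) \<Rightarrow> 'a list \<Rightarrow> bool" where
  "is_cycle V E cs \<longleftrightarrow> length cs \<ge> 3 \<and> distinct cs \<and> set cs \<subseteq> V
      \<and> (\<forall>i. Suc i < length cs \<longrightarrow> E (cs ! i) (cs ! Suc i))
      \<and> E (last cs) (hd cs)"

definition tree :: "'a set \<Rightarrow> ('a \<Rightarrow> 'a \<Rightarrow> bool) \<Rightarrow> bool" where
  "tree V E \<longleftrightarrow> sgraph V E \<and> V \<noteq> {} \<and> connected_graph V E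
      \<and> \<not> (\<exists>cs. is_cycle V E cs)"

definition leaf :: "'a set \<Rightarrow> ('a \<Rightarrow> 'a \<Rightarrow> bool) \<Rightarrow> 'a \<Rightarrow> bool" where
  "leaf V E v \<longleftrightarrow> v \<in> V \<and> card (nbhd V E v) = 1"

definition support_vertex :: "'a set \<Rightarrow> ('a \<Rightarrow> 'a \<Rightarrow> bool) \<Rightarrow> 'a \<Rightarrow> bool" where
  "support_vertex V E u \<longleftrightarrow> u \<in> V \<and> (\<exists>v \<in> nbhd V E u. leaf V E v)"

definition leaves_at :: "'a set \<Rightarrow> ('a \<Rightarrow> 'a \<Rightarrow> bool) \<Rightarrow> 'a \<Rightarrow> 'a set" where
  "leaves_at V E u = {v \<in> nbhd V E u. leaf V E v}"

definition is_DLD :: "'a set \<Rightarrow> ('a \<Rightarrow> 'a \<Rightarrow> bool) \<Rightarrow> 'a set \<Rightarrow> bool" where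
  "is_DLD V E C \<longleftrightarrow> C \<noteq> {} \<and> C \<subseteq> V
     \<and> (\<forall>u \<in> V - C. cnbhd V E u \<inter> C \<noteq> {})
     \<and> (\<forall>u \<in> V - C. \<forall>v \<in> V - C. u \<noteq> v \<longrightarrow>
           \<not> (cnbhd V E u \<inter> C \<subseteq> cnbhd V E v \<inter> C))"

definition gamma_DLD :: "'a set \<Rightarrow> ('a \<Rightarrow> 'a \<Rightarrow> bool) \<Rightarrow> nat" where
  "gamma_DLD V E = Min {card C | C. is_DLD V E C}"

end

theory Submission
  imports Defs
begin

text \<open>Let L be the leaves at u, w the remaining neighbour of u, and T' = T - (L \<union> {u}).
  A code of T misses at most one leaf of L, and if it misses one it contains u and w; so
  intersecting a code of T with T' (after adding w when u is a codeword but w is not) loses at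
  least |L| vertices. Conversely a code of T' extends to T by adding L if w is not a codeword,
  making u the only new non-codeword, and by adding u and all leaves but one otherwise.\<close>

lemma finite_DLD_cards:
  assumes "finite V" shows "finite {card C | C. is_DLD V E C}"
proof -
  have "{card C | C. is_DLD V E C} \<subseteq> card ` Pow V" unfolding is_DLD_def by auto
  then show ?thesis using assms by (meson finite_Pow_iff finite_imageI finite_subset)
qed

lemma gamma_DLD_le:
  assumes "finite V" "is_DLD V E C" shows "gamma_DLD V E \<le> card C"
  unfolding gamma_DLD_def using finite_DLD_cards[OF assms(1)] assms(2) by (auto intro: Min_le)

lemma gamma_DLD_attained:
  assumes "finite V" "V \<noteq> {}" obtains C where "is_DLD V E C" "card C = gamma_DLD V E"
proof -
  have "is_DLD V E V" using assms(2) unfolding is_DLD_def by auto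
  then have "{card C | C. is_DLD V E C} \<noteq> {}" by auto
  from Min_in[OF finite_DLD_cards[OF assms(1)] this] that show ?thesis
    unfolding gamma_DLD_def by auto
qed

lemma cnbhd_subset: "v \<in> V \<Longrightarrow> cnbhd V E v \<subseteq> V"
  unfolding cnbhd_def nbhd_def by auto

lemma is_DLDI:
  assumes "C \<noteq> {}" "C \<subseteq> V"
    and "\<And>v. v \<in> V - C \<Longrightarrow> cnbhd V E v \<inter> C \<noteq> {}"
    and "\<And>a b. a \<in> V - C \<Longrightarrow> b \<in> V - C \<Longrightarrow> a \<noteq> b \<Longrightarrow>
           \<not> cnbhd V E a \<inter> C \<subseteq> cnbhd V E b \<inter> C"
  shows "is_DLD V E C"
  using assms unfolding is_DLD_def by blast

lemma is_DLD_subset: "is_DLD V E C \<Longrightarrow> C \<subseteq> V"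
  unfolding is_DLD_def by blast

lemma is_DLD_dominates: "is_DLD V E C \<Longrightarrow> v \<in> V - C \<Longrightarrow> cnbhd V E v \<inter> C \<noteq> {}"
  unfolding is_DLD_def by blast

lemma is_DLD_separates:
  "is_DLD V E C \<Longrightarrow> a \<in> V - C \<Longrightarrow> b \<in> V - C \<Longrightarrow> a \<noteq> b \<Longrightarrow>
     \<not> cnbhd V E a \<inter> C \<subseteq> cnbhd V E b \<inter> C"
  unfolding is_DLD_def by blast

lemma is_DLD_superset:
  assumes "is_DLD V E C" "C \<subseteq> D" "D \<subseteq> V" shows "is_DLD V E D"
proof (rule is_DLDI)
  show "D \<noteq> {}" using assms(1,2) unfolding is_DLD_def by blast
  show "cnbhd V E v \<inter> D \<noteq> {}" if "v \<in> V - D" for v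
    using is_DLD_dominates[OF assms(1), of v] that assms(2) by blast
  show "\<not> cnbhd V E a \<inter> D \<subseteq> cnbhd V E b \<inter> D"
    if "a \<in> V - D" "b \<in> V - D" "a \<noteq> b" for a b
    using is_DLD_separates[OF assms(1), of a b] that assms(2) by blast
qed (fact assms(3))

lemma is_DLD_restrict:
  assumes C: "is_DLD V E C" and "V' \<subseteq> V" "V' \<noteq> {}"
    and traces: "\<And>v. v \<in> V' - C \<Longrightarrow> cnbhd V E v \<inter> C = cnbhd V' E v \<inter> (C \<inter> V')"
  shows "is_DLD V' E (C \<inter> V')"
proof (rule is_DLDI)
  have dom: "cnbhd V' E v \<inter> (C \<inter> V') \<noteq> {}" if "v \<in> V' - C" for v
    using is_DLD_dominates[OF C, of v] traces[OF that] that assms(2) by auto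
  then show "cnbhd V' E v \<inter> (C \<inter> V') \<noteq> {}" if "v \<in> V' - C \<inter> V'" for v
    using that by blast
  show "C \<inter> V' \<noteq> {}"
  proof (cases "V' \<subseteq> C")
    case True then show ?thesis using assms(3) by blast
  next
    case False then show ?thesis using dom by blast
  qed
  show "\<not> cnbhd V' E a \<inter> (C \<inter> V') \<subseteq> cnbhd V' E b \<inter> (C \<inter> V')"
    if ab: "a \<in> V' - C \<inter> V'" "b \<in> V' - C \<inter> V'" "a \<noteq> b" for a b
  proof -
    have a: "a \<in> V' - C" and b: "b \<in> V' - C" using ab by auto
    have "\<not> cnbhd V E a \<inter> C \<subseteq> cnbhd V E b \<inter> C"
      using is_DLD_separates[OF C, of a b] a b ab(3) assms(2) by blast
    then show ?thesis unfolding traces[OF a] traces[OF b] .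
  qed
qed blast

text \<open>The new non-codeword z is separated from the old ones because its trace avoids V',
  which contains the traces of all old non-codewords.\<close>
lemma is_DLD_extend:
  assumes C': "is_DLD V' E C'" and "D \<subseteq> V" "D \<inter> V' = C'"
    and traces: "\<And>v. v \<in> V' - C' \<Longrightarrow> cnbhd V E v \<inter> D = cnbhd V' E v \<inter> C'"
    and rest: "V - D = insert z (V' - C')" "z \<notin> V'"
    and z_dom: "cnbhd V E z \<inter> D \<noteq> {}" and z_trace: "cnbhd V E z \<inter> D \<inter> V' = {}"
  shows "is_DLD V E D"
proof (rule is_DLDI)
  have old_sub: "cnbhd V E b \<inter> D \<subseteq> V'" and old_dom: "cnbhd V E b \<inter> D \<noteq> {}"
    if "b \<in> V' - C'" for b
    using is_DLD_dominates[OF C' that] cnbhd_subset[of b V' E] that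
    unfolding traces[OF that] by auto
  have non_code: "v = z \<or> v \<in> V' - C'" if "v \<in> V - D" for v
    using that unfolding rest(1) by blast
  show "D \<noteq> {}" using z_dom by blast
  show "cnbhd V E v \<inter> D \<noteq> {}" if "v \<in> V - D" for v
    using non_code[OF that] old_dom z_dom by blast
  show "\<not> cnbhd V E a \<inter> D \<subseteq> cnbhd V E b \<inter> D"
    if ab: "a \<in> V - D" "b \<in> V - D" "a \<noteq> b" for a b
  proof -
    consider "a = z" "b \<in> V' - C'" | "b = z" "a \<in> V' - C'" | "a \<in> V' - C'" "b \<in> V' - C'"
      using non_code[OF ab(1)] non_code[OF ab(2)] ab(3) by blast
    then show ?thesis
    proof cases
      case 1 then show ?thesis using old_sub[of b] z_dom z_trace by blast
    next
      case 2 then show ?thesis using old_sub[of a] old_dom[of a] z_trace by blast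
    next
      case 3 then show ?thesis
        using is_DLD_separates[OF C', of a b] ab(3) unfolding traces[OF 3(1)] traces[OF 3(2)] by blast
    qed
  qed
qed (fact assms(2))

text \<open>The local structure around u; the tree hypothesis of the theorem is needed only through it.\<close>
locale pendant_star =
  fixes V :: "'a set" and E :: "'a \<Rightarrow> 'a \<Rightarrow> bool" and u w :: 'a and L :: "'a set"
  assumes sgraph: "sgraph V E"
    and nbhd_centre: "nbhd V E u = insert w L"
    and nbhd_leaf: "x \<in> L \<Longrightarrow> nbhd V E x = {u}"
    and w_notin_L: "w \<notin> L"
    and L_nonempty: "L \<noteq> {}"
begin

abbreviation rest :: "'a set" where "rest \<equiv> V - (L \<union> {u})"

lemma finite_V: "finite V"
  using sgraph unfolding sgraph_def by blast

lemma edge_sym: "E a b \<Longrightarrow> E b a" and edge_irrefl: "\<not> E a a"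
  and edge_in_V: "E a b \<Longrightarrow> a \<in> V \<and> b \<in> V"
  using sgraph unfolding sgraph_def by blast+

lemma nbhd_centre_iff: "v \<in> V \<and> E u v \<longleftrightarrow> v = w \<or> v \<in> L"
  using nbhd_centre unfolding nbhd_def by (metis insert_iff mem_Collect_eq)

lemma E_u_w: "E u w" and w_in_V: "w \<in> V" and E_u_leaf: "x \<in> L \<Longrightarrow> E u x"
  and L_subset_V: "L \<subseteq> V"
  using nbhd_centre_iff by blast+

lemma u_in_V: "u \<in> V"
  using edge_in_V[OF E_u_w] by simp

lemma u_notin_L: "u \<notin> L"
  using E_u_leaf edge_irrefl by blast

lemma w_in_rest: "w \<in> rest"
  using w_in_V w_notin_L E_u_w edge_irrefl by auto

lemma rest_subset: "rest \<subseteq> V" and u_notin_rest: "u \<notin> rest"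
  by auto

lemma finite_L: "finite L"
  using finite_V L_subset_V finite_subset by blast

lemma no_edge_rest_leaf: "v \<in> rest \<Longrightarrow> x \<in> L \<Longrightarrow> \<not> E v x"
  using nbhd_leaf edge_sym edge_in_V unfolding nbhd_def by blast

lemma no_edge_rest_centre: "v \<in> rest \<Longrightarrow> v \<noteq> w \<Longrightarrow> \<not> E v u"
  using nbhd_centre edge_sym edge_in_V unfolding nbhd_def by blast

lemma cnbhd_rest: "v \<in> rest \<Longrightarrow> v \<noteq> w \<Longrightarrow> cnbhd V E v = cnbhd rest E v"
  using no_edge_rest_leaf no_edge_rest_centre unfolding cnbhd_def nbhd_def by auto

lemma cnbhd_w: "cnbhd V E w = insert u (cnbhd rest E w)"
  using no_edge_rest_leaf[OF w_in_rest] E_u_w edge_sym u_in_V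
  unfolding cnbhd_def nbhd_def by auto

lemma cnbhd_leaf: "x \<in> L \<Longrightarrow> cnbhd V E x = {x, u}"
  using nbhd_leaf unfolding cnbhd_def by auto

lemma cnbhd_centre: "cnbhd V E u = insert u (insert w L)"
  using nbhd_centre unfolding cnbhd_def by auto

lemma card_split:
  assumes "C \<subseteq> V" shows "card C = card (C \<inter> rest) + card (C \<inter> (L \<union> {u}))"
proof -
  have "finite C" using assms finite_V finite_subset by blast
  moreover have "C = (C \<inter> rest) \<union> (C \<inter> (L \<union> {u}))" using assms by auto
  ultimately show ?thesis
    using card_Un_disjoint[of "C \<inter> rest" "C \<inter> (L \<union> {u})"] by auto
qed

lemma code_missing_leaf:
  assumes C: "is_DLD V E C" and x: "x \<in> L - C"
  shows "u \<in> C" and "w \<in> C" and "L - {x} \<subseteq> C"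
proof -
  have x_nc: "x \<in> V - C" using x L_subset_V by blast
  show u: "u \<in> C"
    using is_DLD_dominates[OF C x_nc] cnbhd_leaf[of x] x by auto
  have trace_x: "cnbhd V E x \<inter> C = {u}"
    using cnbhd_leaf[of x] x u by auto
  show "w \<in> C"
  proof (rule ccontr)
    assume "w \<notin> C"
    then have "\<not> cnbhd V E x \<inter> C \<subseteq> cnbhd V E w \<inter> C"
      using is_DLD_separates[OF C x_nc, of w] w_in_V w_notin_L x by auto
    then show False using trace_x cnbhd_w u by auto
  qed
  show "L - {x} \<subseteq> C"
  proof
    fix y assume y: "y \<in> L - {x}"
    show "y \<in> C"
    proof (rule ccontr)
      assume "y \<notin> C"
      then have "cnbhd V E y \<inter> C = {u}" and "y \<in> V - C"
        using cnbhd_leaf[of y] y u L_subset_V by auto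
      then show False
        using is_DLD_separates[OF C _ x_nc, of y] trace_x y by auto
    qed
  qed
qed

lemma card_leaves_le_code:
  assumes C: "is_DLD V E C" shows "card L \<le> card (C \<inter> (L \<union> {u}))"
proof (cases "L \<subseteq> C")
  case True
  then show ?thesis using finite_L by (intro card_mono) auto
next
  case False
  then obtain x where x: "x \<in> L - C" by blast
  have "card L = card (insert u (L - {x}))"
    using x finite_L u_notin_L card_gt_0_iff[of L] by auto
  also have "\<dots> \<le> card (C \<inter> (L \<union> {u}))"
    using code_missing_leaf[OF C x] finite_L by (intro card_mono) auto
  finally show ?thesis .
qed

text \<open>If u is a codeword but w is not, the traces of w in T and in T' differ by u.\<close>
lemma is_DLD_restrict_rest:
  assumes C: "is_DLD V E C" and uw: "u \<in> C \<Longrightarrow> w \<in> C"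
  shows "is_DLD rest E (C \<inter> rest)"
proof (rule is_DLD_restrict[OF C rest_subset])
  show "rest \<noteq> {}" using w_in_rest by blast
  show "cnbhd V E v \<inter> C = cnbhd rest E v \<inter> (C \<inter> rest)" if v: "v \<in> rest - C" for v
  proof (cases "v = w")
    case True
    then show ?thesis using cnbhd_w uw v cnbhd_subset[of w rest E] w_in_rest by auto
  next
    case False
    then show ?thesis using cnbhd_rest[of v] cnbhd_subset[of v rest E] v by auto
  qed
qed

lemma shrink_code:
  assumes C: "is_DLD V E C"
  obtains C' where "is_DLD rest E C'" "card C' + card L \<le> card C"
proof (cases "u \<in> C \<longrightarrow> w \<in> C")
  case True
  then show ?thesis
    using that is_DLD_restrict_rest[OF C] card_split[OF is_DLD_subset[OF C]]
      card_leaves_le_code[OF C] by fastforce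
next
  case False
  then have u: "u \<in> C" and w: "w \<notin> C" by auto
  then have "L \<subseteq> C" using code_missing_leaf(2)[OF C] by blast
  then have "card (C \<inter> (L \<union> {u})) = Suc (card L)"
    using u u_notin_L finite_L by (simp add: Int_absorb1)
  moreover have "card (insert w C \<inter> rest) = Suc (card (C \<inter> rest))"
    using w w_in_rest finite_V by (simp add: finite_subset[OF _ finite_V])
  moreover have "is_DLD rest E (insert w C \<inter> rest)"
    using is_DLD_restrict_rest is_DLD_superset[OF C] is_DLD_subset[OF C] w_in_V
    by (meson insertI1 insert_subset subset_insertI)
  ultimately show ?thesis
    using that card_split[OF is_DLD_subset[OF C]] by fastforce
qed

lemma extend_code_by_leaves:
  assumes C': "is_DLD rest E C'" and w: "w \<notin> C'"
  shows "is_DLD V E (C' \<union> L)"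
proof (rule is_DLD_extend[OF C', where z = u])
  have C'_rest: "C' \<subseteq> rest" using is_DLD_subset[OF C'] .
  then show "C' \<union> L \<subseteq> V" "(C' \<union> L) \<inter> rest = C'" using L_subset_V by auto
  show "V - (C' \<union> L) = insert u (rest - C')" using u_in_V u_notin_L C'_rest by auto
  show "cnbhd V E v \<inter> (C' \<union> L) = cnbhd rest E v \<inter> C'" if v: "v \<in> rest - C'" for v
  proof (cases "v = w")
    case True
    then show ?thesis
      using cnbhd_w cnbhd_subset[of w rest E] w_in_rest C'_rest u_notin_L by auto
  next
    case False
    then show ?thesis using cnbhd_rest[of v] cnbhd_subset[of v rest E] v by auto
  qed
  show "cnbhd V E u \<inter> (C' \<union> L) \<noteq> {}" using cnbhd_centre L_nonempty by auto
  show "cnbhd V E u \<inter> (C' \<union> L) \<inter> rest = {}" using cnbhd_centre w by auto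
qed (fact u_notin_rest)

lemma extend_code_by_centre:
  assumes C': "is_DLD rest E C'" and w: "w \<in> C'" and x: "x \<in> L"
  shows "is_DLD V E (C' \<union> insert u (L - {x}))"
proof (rule is_DLD_extend[OF C', where z = x])
  have C'_rest: "C' \<subseteq> rest" using is_DLD_subset[OF C'] .
  then show "C' \<union> insert u (L - {x}) \<subseteq> V" "(C' \<union> insert u (L - {x})) \<inter> rest = C'"
    using L_subset_V u_in_V by auto
  show "V - (C' \<union> insert u (L - {x})) = insert x (rest - C')"
    using x L_subset_V C'_rest u_notin_L by auto
  show "cnbhd V E v \<inter> (C' \<union> insert u (L - {x})) = cnbhd rest E v \<inter> C'" if v: "v \<in> rest - C'" for v
    using cnbhd_rest[of v] cnbhd_subset[of v rest E] v w by auto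
  show "x \<notin> rest" using x by blast
  show "cnbhd V E x \<inter> (C' \<union> insert u (L - {x})) \<noteq> {}" using cnbhd_leaf[OF x] by auto
  show "cnbhd V E x \<inter> (C' \<union> insert u (L - {x})) \<inter> rest = {}" using cnbhd_leaf[OF x] x by auto
qed

lemma extend_code:
  assumes C': "is_DLD rest E C'"
  obtains D where "is_DLD V E D" "card D = card C' + card L"
proof -
  have C'_rest: "C' \<subseteq> rest" using is_DLD_subset[OF C'] .
  have fin: "finite C'" using C'_rest finite_V finite_subset by blast
  show ?thesis
  proof (cases "w \<in> C'")
    case True
    obtain x where x: "x \<in> L" using L_nonempty by blast
    have "card (insert u (L - {x})) = card L"
      using x finite_L u_notin_L card_gt_0_iff[of L] by auto
    moreover have "C' \<inter> insert u (L - {x}) = {}" using C'_rest by auto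
    ultimately have "card (C' \<union> insert u (L - {x})) = card C' + card L"
      using card_Un_disjoint[OF fin, of "insert u (L - {x})"] finite_L by simp
    then show ?thesis using that extend_code_by_centre[OF C' True x] by blast
  next
    case False
    have "C' \<inter> L = {}" using C'_rest by auto
    then have "card (C' \<union> L) = card C' + card L"
      using card_Un_disjoint[OF fin finite_L] by simp
    then show ?thesis using that extend_code_by_leaves[OF C' False] by blast
  qed
qed

theorem gamma_DLD_rest: "gamma_DLD rest E = gamma_DLD V E - card L"
proof -
  have fin_rest: "finite rest" and rest_ne: "rest \<noteq> {}"
    using finite_V w_in_rest by auto
  obtain C where C: "is_DLD V E C" "card C = gamma_DLD V E"
    using gamma_DLD_attained[OF finite_V] u_in_V by blast
  obtain C' where C': "is_DLD rest E C'" "card C' = gamma_DLD rest E"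
    using gamma_DLD_attained[OF fin_rest rest_ne] by blast
  obtain C'' where "is_DLD rest E C''" "card C'' + card L \<le> card C"
    using shrink_code[OF C(1)] .
  then have "gamma_DLD rest E + card L \<le> gamma_DLD V E"
    using gamma_DLD_le[OF fin_rest, of E C''] C(2) by linarith
  moreover obtain D where "is_DLD V E D" "card D = card C' + card L"
    using extend_code[OF C'(1)] .
  then have "gamma_DLD V E \<le> gamma_DLD rest E + card L"
    using gamma_DLD_le[OF finite_V, of E D] C'(2) by linarith
  ultimately show ?thesis by simp
qed

end

lemma pendant_star_leaves_at:
  assumes sg: "sgraph V E" and "support_vertex V E u"
    and w: "nbhd V E u - leaves_at V E u = {w}"
  shows "pendant_star V E u w (leaves_at V E u)"
proof
  let ?L = "leaves_at V E u"
  have L_nbhd: "?L \<subseteq> nbhd V E u" unfolding leaves_at_def by blast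
  show "sgraph V E" by (fact sg)
  show "nbhd V E u = insert w ?L" using w L_nbhd by blast
  show "w \<notin> ?L" using w by blast
  show "?L \<noteq> {}" using assms(2) unfolding support_vertex_def leaves_at_def by blast
  show "nbhd V E x = {u}" if x: "x \<in> ?L" for x
  proof -
    have "card (nbhd V E x) = 1" using x unfolding leaves_at_def leaf_def by blast
    moreover have "E u x" "u \<in> V" using x L_nbhd sg unfolding nbhd_def sgraph_def by auto
    then have "u \<in> nbhd V E x" using sg unfolding nbhd_def sgraph_def by blast
    ultimately show ?thesis by (metis card_1_singletonE singletonD)
  qed
qed

theorem mainTheorem12:
  fixes V :: "'a set" and E :: "'a \<Rightarrow> 'a \<Rightarrow> bool" and u :: 'a
  assumes "tree V E"
    and "support_vertex V E u"
    and "card (nbhd V E u - leaves_at V E u) = 1"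
  shows "gamma_DLD (V - (leaves_at V E u \<union> {u})) E
           = gamma_DLD V E - card (leaves_at V E u)"
proof -
  obtain w where w: "nbhd V E u - leaves_at V E u = {w}"
    using assms(3) by (meson card_1_singletonE)
  have "sgraph V E" using assms(1) unfolding tree_def by blast
  then interpret pendant_star V E u w "leaves_at V E u"
    using assms(2) w by (rule pendant_star_leaves_at)
  show ?thesis by (fact gamma_DLD_rest)
qed

end
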